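(* Let $p$ be a prime and $t\geq 2$. Then $\mathcal S(\mathbb Z_{p^t})\subseteq \mathcal S(\mathbb Z_{p^{t-1}})$, where $\mathcal S(\mathbb Z_n)$ denotes the set of determinants of $n\times n$ circulant matrices with integer entries. *)

theory Defs
  imports Main "HOL-Computational_Algebra.Primes" "Jordan_Normal_Form.Determinant"
begin

definition circulant :: "nat \<Rightarrow> (nat \<Rightarrow> int) \<Rightarrow> int mat" where
  "circulant n a = mat n n (\<lambda>(i, j). a ((j + n - i) mod n))"

definition circ_dets :: "nat \<Rightarrow> int set" where
  "circ_dets n = {det (circulant n a) | a. True}"

end

(* Write N = m * k and f x = a 0 + a 1 * x + ... + a (N - 1) * x ^ (N - 1). Diagonalising by
   Vandermonde matrices gives det circ_N(a) = prod_{z ^ N = 1} f z. Group the N-th roots of unity z by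
   u = z ^ m, which runs over the k-th roots of unity: the partial product H u = prod_{z ^ m = u} f z is
   the norm of f from Z[x] down to Z[y], y = x ^ m, hence a polynomial with integer coefficients.
   Reducing H modulo y ^ k - 1 yields integers b 0, ..., b (k - 1) with H u = sum_q b q * u ^ q at
   every k-th root of unity u, so det circ_N(a) = prod_{u ^ k = 1} H u = det circ_k(b). *)

theory Submission
  imports Defs "Jordan_Normal_Form.Char_Poly" "HOL-Analysis.Complex_Transcendental"
begin

definition twisted_circulant :: "nat \<Rightarrow> 'a::times \<Rightarrow> (nat \<Rightarrow> 'a) \<Rightarrow> 'a mat" where
  "twisted_circulant n c b =
     Matrix.mat n n (\<lambda>(i, j). if i \<le> j then b (j - i) else c * b (j + n - i))"

lemma twisted_circulant_carrier [simp]: "twisted_circulant n c b \<in> carrier_mat n n"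
  by (simp add: twisted_circulant_def)

lemma index_twisted_circulant [simp]:
  "i < n \<Longrightarrow> j < n \<Longrightarrow>
    twisted_circulant n c b $$ (i, j) = (if i \<le> j then b (j - i) else c * b (j + n - i))"
  by (simp add: twisted_circulant_def)

lemma circulant_eq_twisted_circulant: "circulant n a = twisted_circulant n 1 a"
proof (rule eq_matI)
  fix i j assume "i < dim_row (twisted_circulant n 1 a)" "j < dim_col (twisted_circulant n 1 a)"
  then have "i < n" "j < n" by (simp_all add: twisted_circulant_def)
  then show "circulant n a $$ (i, j) = twisted_circulant n 1 a $$ (i, j)"
    by (auto simp: circulant_def twisted_circulant_def mod_if)
qed (simp_all add: circulant_def twisted_circulant_def)

lemma (in times_hom) map_mat_twisted_circulant:
  "map_mat hom (twisted_circulant n c b) = twisted_circulant n (hom c) (hom \<circ> b)"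
  by (rule eq_matI) (simp_all add: twisted_circulant_def hom_mult)

lemma twisted_circulant_eigenvector:
  fixes \<theta> :: "'a::comm_ring_1"
  assumes \<theta>: "\<theta> ^ n = c" and s: "s < n"
  shows "(\<Sum>r<n. twisted_circulant n c b $$ (s, r) * \<theta> ^ r) = \<theta> ^ s * (\<Sum>r<n. b r * \<theta> ^ r)"
proof -
  let ?T = "\<lambda>r. twisted_circulant n c b $$ (s, r) * \<theta> ^ r"
  have upper: "(\<Sum>r\<in>{s..<n}. ?T r) = (\<Sum>r<n - s. \<theta> ^ s * (b r * \<theta> ^ r))"
  proof (rule sum.reindex_bij_witness[of _ "\<lambda>r. r + s" "\<lambda>r. r - s"])
    fix r assume r: "r \<in> {s..<n}"
    then have "\<theta> ^ r = \<theta> ^ s * \<theta> ^ (r - s)"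
      by (simp flip: power_add)
    then show "\<theta> ^ s * (b (r - s) * \<theta> ^ (r - s)) = ?T r"
      using r s by simp
  qed auto
  have lower: "(\<Sum>r<s. ?T r) = (\<Sum>r\<in>{n - s..<n}. \<theta> ^ s * (b r * \<theta> ^ r))"
  proof (rule sum.reindex_bij_witness[of _ "\<lambda>r. r + s - n" "\<lambda>r. r + n - s"])
    fix r assume r: "r \<in> {..<s}"
    then have "s + (r + n - s) = n + r"
      using s by auto
    then have "\<theta> ^ s * \<theta> ^ (r + n - s) = c * \<theta> ^ r"
      by (metis \<theta> power_add)
    then show "\<theta> ^ s * (b (r + n - s) * \<theta> ^ (r + n - s)) = ?T r"
      using r s by (simp add: mult.left_commute[of "\<theta> ^ s"] mult_ac)
  qed (use s in auto)
  have "(\<Sum>r<n. ?T r) = (\<Sum>r<s. ?T r) + (\<Sum>r\<in>{s..<n}. ?T r)"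
    using sum.atLeastLessThan_concat[of 0 s n ?T] s by (simp add: atLeast0LessThan)
  also have "\<dots> = (\<Sum>r<n - s. \<theta> ^ s * (b r * \<theta> ^ r)) + (\<Sum>r\<in>{n - s..<n}. \<theta> ^ s * (b r * \<theta> ^ r))"
    unfolding upper lower by (rule add.commute)
  also have "\<dots> = (\<Sum>r<n. \<theta> ^ s * (b r * \<theta> ^ r))"
    using sum.atLeastLessThan_concat[of 0 "n - s" n "\<lambda>r. \<theta> ^ s * (b r * \<theta> ^ r)"]
    by (simp add: atLeast0LessThan)
  finally show ?thesis
    by (simp add: sum_distrib_left)
qed

lemma det_vandermonde_nonzero:
  fixes x :: "nat \<Rightarrow> 'a::field"
  assumes inj: "inj_on x {..<n}"
  shows "det (Matrix.mat n n (\<lambda>(t, r). x t ^ r)) \<noteq> 0"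
proof
  assume "det (Matrix.mat n n (\<lambda>(t, r). x t ^ r)) = 0"
  then obtain v where v: "v \<in> carrier_vec n" "v \<noteq> 0\<^sub>v n"
    and kernel: "Matrix.mat n n (\<lambda>(t, r). x t ^ r) *\<^sub>v v = 0\<^sub>v n"
    using det_0_iff_vec_prod_zero_field[OF mat_carrier] by blast
  define q where "q = (\<Sum>r<n. monom (v $ r) r)"
  have coeff_q: "coeff q r = (if r < n then v $ r else 0)" for r
    by (simp add: q_def coeff_sum coeff_monom)
  have roots: "poly q (x t) = 0" if "t < n" for t
  proof -
    have "poly q (x t) = (Matrix.mat n n (\<lambda>(t, r). x t ^ r) *\<^sub>v v) $ t"
      using that v(1) by (simp add: q_def poly_sum poly_monom scalar_prod_def atLeast0LessThan mult.commute)
    then show ?thesis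
      using kernel that by simp
  qed
  have "q = 0"
  proof (rule ccontr)
    assume "q \<noteq> 0"
    have "card (x ` {..<n}) \<le> card {y. poly q y = 0}"
      using roots poly_roots_finite[OF \<open>q \<noteq> 0\<close>] by (intro card_mono) auto
    also have "\<dots> \<le> degree q"
      using \<open>q \<noteq> 0\<close> by (rule card_poly_roots_bound)
    also have "degree q < n"
    proof (rule ccontr)
      assume "\<not> degree q < n"
      then have "lead_coeff q = 0"
        by (simp add: coeff_q)
      with \<open>q \<noteq> 0\<close> show False
        by simp
    qed
    finally show False
      using inj by (simp add: card_image)
  qed
  then have "v $ r = 0" if "r < n" for r
    using coeff_q[of r] that by simp
  then have "v = 0\<^sub>v n"
    using v(1) by (intro eq_vecI) auto
  with v(2) show False ..
qed

lemma det_eq_prod_eigenvalues: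
  fixes A :: "'a::field mat" and x ev :: "nat \<Rightarrow> 'a"
  assumes A: "A \<in> carrier_mat n n" and inj: "inj_on x {..<n}"
    and eigen: "\<And>s t. s < n \<Longrightarrow> t < n \<Longrightarrow> (\<Sum>r<n. A $$ (s, r) * x t ^ r) = x t ^ s * ev t"
  shows "det A = (\<Prod>t<n. ev t)"
proof -
  define V where "V = transpose_mat (Matrix.mat n n (\<lambda>(t, r). x t ^ r))"
  define D where "D = Matrix.mat n n (\<lambda>(i, j). if i = j then ev i else 0)"
  have V: "V \<in> carrier_mat n n" and D: "D \<in> carrier_mat n n"
    by (simp_all add: V_def D_def)
  have "A * V = V * D"
  proof (rule eq_matI)
    fix s t assume "s < dim_row (V * D)" "t < dim_col (V * D)"
    then have s: "s < n" and t: "t < n"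
      using V D by auto
    have "(A * V) $$ (s, t) = x t ^ s * ev t"
      using A s t eigen[OF s t] by (simp add: V_def scalar_prod_def atLeast0LessThan)
    also have "\<dots> = (V * D) $$ (s, t)"
      using s t by (simp add: V_def D_def scalar_prod_def if_distrib[of "(*) _"] sum.delta cong: if_cong)
    finally show "(A * V) $$ (s, t) = (V * D) $$ (s, t)" .
  qed (use A V D in auto)
  then have "det A * det V = det V * det D"
    by (metis A V D det_mult)
  moreover have "det V \<noteq> 0"
    using det_vandermonde_nonzero[OF inj] det_transpose[of "Matrix.mat n n (\<lambda>(t, r). x t ^ r)" n]
    by (simp add: V_def)
  moreover have "det D = (\<Prod>t<n. ev t)"
  proof -
    have "upper_triangular D"
      by (simp add: D_def upper_triangular_def)
    then have "det D = prod_list (diag_mat D)"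
      using D by (rule det_upper_triangular)
    then show ?thesis
      by (simp add: prod_list_diag_prod atLeast0LessThan D_def)
  qed
  ultimately show ?thesis
    by simp
qed

lemma det_twisted_circulant:
  fixes \<theta> :: "nat \<Rightarrow> 'a::field"
  assumes "inj_on \<theta> {..<n}" and "\<And>t. t < n \<Longrightarrow> \<theta> t ^ n = c"
  shows "det (twisted_circulant n c b) = (\<Prod>t<n. \<Sum>r<n. b r * \<theta> t ^ r)"
  by (rule det_eq_prod_eigenvalues[OF twisted_circulant_carrier assms(1)],
      rule twisted_circulant_eigenvector) (simp_all add: assms(2))

lemma of_int_det_circulant:
  fixes z :: "'a::field"
  assumes "z ^ n = 1" and "inj_on (\<lambda>j. z ^ j) {..<n}"
  shows "of_int (det (circulant n a)) = (\<Prod>j<n. \<Sum>r<n. of_int (a r) * (z ^ j) ^ r)"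
proof -
  have "of_int (det (circulant n a)) = det (twisted_circulant n 1 (of_int \<circ> a) :: 'a mat)"
    by (simp flip: of_int_hom.hom_det add: circulant_eq_twisted_circulant of_int_hom.map_mat_twisted_circulant)
  also have "\<dots> = (\<Prod>j<n. \<Sum>r<n. (of_int \<circ> a) r * (z ^ j) ^ r)"
    by (rule det_twisted_circulant) (use assms in \<open>metis mult.commute power_mult power_one\<close>)+
  finally show ?thesis
    by simp
qed

lemma primitive_root_of_unity_exists:
  assumes "n > 0"
  obtains z :: complex where "z ^ n = 1" and "inj_on (\<lambda>j. z ^ j) {..<n}"
proof
  define z where "z = exp (2 * of_real pi * \<i> / of_nat n)"
  have z_power: "z ^ j = exp (2 * of_real pi * \<i> * of_nat j / of_nat n)" for j
    by (simp add: z_def flip: exp_of_nat_mult) (simp add: algebra_simps)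
  show "z ^ n = 1"
    using assms by (simp add: z_power complex_root_unity_eq_1)
  show "inj_on (\<lambda>j. z ^ j) {..<n}"
    using assms by (auto simp: inj_on_def z_power complex_root_unity_eq)
qed

lemma add_mult_less_mult:
  fixes r q m k :: nat
  assumes "r < m" and "q < k"
  shows "r + m * q < m * k"
proof -
  have "r + m * q < m * Suc q"
    using assms(1) by simp
  also have "\<dots> \<le> m * k"
    using assms(2) by (intro mult_le_mono2) simp
  finally show ?thesis .
qed

context comm_monoid_set
begin

lemma nat_group_residues:
  fixes m k :: nat
  shows "F (\<lambda>r. F (\<lambda>q. g (r + m * q)) {..<k}) {..<m} = F g {..<m * k}"
proof (cases "m = 0")
  case False
  have "F (\<lambda>r. F (\<lambda>q. g (r + m * q)) {..<k}) {..<m} = F (\<lambda>(r, q). g (r + m * q)) ({..<m} \<times> {..<k})"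
    by (simp add: cartesian_product)
  also have "\<dots> = F g {..<m * k}"
  proof (rule reindex_bij_witness[of _ "\<lambda>i. (i mod m, i div m)" "\<lambda>(r, q). r + m * q"])
    fix i assume "i \<in> {..<m * k}"
    then show "(i mod m, i div m) \<in> {..<m} \<times> {..<k}"
      using False by (auto simp: less_mult_imp_div_less mult.commute)
  next
    fix rq assume "rq \<in> {..<m} \<times> {..<k}"
    then show "(case rq of (r, q) \<Rightarrow> r + m * q) \<in> {..<m * k}"
      by (auto intro: add_mult_less_mult)
  qed (use False in auto)
  finally show ?thesis .
qed simp

end

definition wrap_coeffs :: "nat \<Rightarrow> 'a::comm_monoid_add poly \<Rightarrow> nat \<Rightarrow> 'a" where
  "wrap_coeffs k p q = (\<Sum>i | i \<le> degree p \<and> i mod k = q. coeff p i)"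

lemma poly_root_of_unity:
  fixes u :: "'a::comm_ring_1"
  assumes u: "u ^ k = 1" and k: "k > 0"
  shows "poly p u = (\<Sum>q<k. wrap_coeffs k p q * u ^ q)"
proof -
  have u_power_mod: "u ^ i = u ^ (i mod k)" for i
    by (metis u div_mult_mod_eq mult.commute power_add power_mult power_one mult_1)
  have "poly p u = (\<Sum>i\<le>degree p. coeff p i * u ^ (i mod k))"
    by (simp add: poly_altdef u_power_mod[symmetric])
  also have "\<dots> = (\<Sum>q<k. \<Sum>i\<in>{i \<in> {..degree p}. i mod k = q}. coeff p i * u ^ (i mod k))"
    by (rule sum.group[symmetric]) (auto simp: k)
  also have "\<dots> = (\<Sum>q<k. wrap_coeffs k p q * u ^ q)"
    by (auto simp: wrap_coeffs_def sum_distrib_right intro!: sum.cong)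
  finally show ?thesis .
qed

text \<open>With \<open>f = (\<Sum>i<m * k. a i * x ^ i)\<close> and \<open>y = x ^ m\<close>, the matrix below is that of
  multiplication by \<open>f\<close> on the \<open>\<int>[y]\<close>-basis \<open>1, x, \<dots>, x ^ (m - 1)\<close> of \<open>\<int>[y][x] / (x ^ m - y)\<close>;
  so its determinant is the norm \<open>\<Prod>\<theta> ^ m = y. f \<theta>\<close>.\<close>
definition norm_poly :: "nat \<Rightarrow> nat \<Rightarrow> (nat \<Rightarrow> int) \<Rightarrow> int poly" where
  "norm_poly m k a = det (twisted_circulant m [:0, 1:] (\<lambda>r. \<Sum>q<k. monom (a (r + m * q)) q))"

lemma poly_norm_poly:
  fixes \<theta> :: "nat \<Rightarrow> 'a::field"
  assumes "inj_on \<theta> {..<m}" and \<theta>: "\<And>s. s < m \<Longrightarrow> \<theta> s ^ m = y"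
  shows "poly (of_int_poly (norm_poly m k a)) y = (\<Prod>s<m. \<Sum>i<m * k. of_int (a i) * \<theta> s ^ i)"
proof -
  interpret eval: comm_ring_hom "\<lambda>p. poly (of_int_poly p) y"
    by unfold_locales (simp_all add: of_int_poly_hom.hom_add of_int_poly_hom.hom_mult)
  define G where "G = (\<lambda>r. \<Sum>q<k. of_int (a (r + m * q)) * y ^ q)"
  have "poly (of_int_poly (norm_poly m k a)) y = det (twisted_circulant m y G)"
    unfolding norm_poly_def
    by (simp flip: eval.hom_det add: eval.map_mat_twisted_circulant o_def G_def
        of_int_poly_hom.hom_sum poly_sum poly_monom)
  also have "\<dots> = (\<Prod>s<m. \<Sum>r<m. G r * \<theta> s ^ r)"
    by (rule det_twisted_circulant) (use assms in auto)
  also have "\<dots> = (\<Prod>s<m. \<Sum>i<m * k. of_int (a i) * \<theta> s ^ i)"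
  proof (rule prod.cong [OF refl])
    fix s assume "s \<in> {..<m}"
    then have "y ^ q * \<theta> s ^ r = \<theta> s ^ (r + m * q)" for r q
      by (simp add: \<theta>[symmetric] power_add power_mult mult.commute)
    then have "G r * \<theta> s ^ r = (\<Sum>q<k. of_int (a (r + m * q)) * \<theta> s ^ (r + m * q))" for r
      by (simp add: G_def sum_distrib_right mult.assoc)
    then show "(\<Sum>r<m. G r * \<theta> s ^ r) = (\<Sum>i<m * k. of_int (a i) * \<theta> s ^ i)"
      using sum.nat_group_residues[of "\<lambda>i. of_int (a i) * \<theta> s ^ i" m k] by simp
  qed
  finally show ?thesis .
qed

lemma poly_norm_poly_root_of_unity:
  fixes z :: "'a::field"
  assumes z: "z ^ (m * k) = 1" "inj_on (\<lambda>i. z ^ i) {..<m * k}" and j: "j < k"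
  shows "poly (of_int_poly (norm_poly m k a)) ((z ^ m) ^ j)
    = (\<Prod>s<m. \<Sum>i<m * k. of_int (a i) * (z ^ (j + k * s)) ^ i)"
proof (rule poly_norm_poly)
  have "inj_on (\<lambda>s. j + k * s) {..<m}"
    using j by (auto intro: inj_onI)
  moreover have "(\<lambda>s. j + k * s) ` {..<m} \<subseteq> {..<m * k}"
    using j by (auto simp: add_mult_less_mult mult.commute[of m k])
  ultimately show "inj_on (\<lambda>s. z ^ (j + k * s)) {..<m}"
    using comp_inj_on[OF _ inj_on_subset[OF z(2)]] by (simp add: o_def)
  show "(z ^ (j + k * s)) ^ m = (z ^ m) ^ j" for s
  proof -
    have "(z ^ (j + k * s)) ^ m = (z ^ m) ^ j * (z ^ (m * k)) ^ s"
      by (simp only: power_mult[symmetric] power_add[symmetric]) (simp add: algebra_simps)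
    then show ?thesis
      using z(1) by simp
  qed
qed

lemma circ_dets_mult_subset:
  assumes "m > 0" and "k > 0"
  shows "circ_dets (m * k) \<subseteq> circ_dets k"
proof
  fix d assume "d \<in> circ_dets (m * k)"
  then obtain a where d: "d = det (circulant (m * k) a)"
    by (auto simp: circ_dets_def)
  obtain z :: complex where z: "z ^ (m * k) = 1" "inj_on (\<lambda>j. z ^ j) {..<m * k}"
    using primitive_root_of_unity_exists assms by (metis nat_0_less_mult_iff)
  define f where "f \<theta> = (\<Sum>i<m * k. of_int (a i) * \<theta> ^ i)" for \<theta> :: complex
  define h where "h = norm_poly m k a"
  define b where "b = wrap_coeffs k h"
  define w where "w = z ^ m"
  have w: "w ^ k = 1"
    using z(1) by (simp add: w_def flip: power_mult)
  then have w_unity: "(w ^ j) ^ k = 1" for j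
    by (metis mult.commute power_mult power_one)
  have "inj_on (\<lambda>j. m * j) {..<k}" "(\<lambda>j. m * j) ` {..<k} \<subseteq> {..<m * k}"
    using assms by (auto intro: inj_onI)
  then have "inj_on (\<lambda>j. z ^ (m * j)) {..<k}"
    using comp_inj_on[OF _ inj_on_subset[OF z(2)]] by (simp add: o_def)
  then have w_inj: "inj_on (\<lambda>j. w ^ j) {..<k}"
    by (simp add: w_def power_mult)
  have "of_int d = (\<Prod>i<m * k. f (z ^ i))"
    using of_int_det_circulant[OF z] by (simp add: d f_def flip: power_mult)
  also have "\<dots> = (\<Prod>j<k. \<Prod>s<m. f (z ^ (j + k * s)))"
    using prod.nat_group_residues[of "\<lambda>i. f (z ^ i)" k m] by (simp add: mult.commute)
  also have "\<dots> = (\<Prod>j<k. poly (of_int_poly h) (w ^ j))"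
    using poly_norm_poly_root_of_unity[OF z] by (simp add: h_def f_def w_def)
  also have "\<dots> = (\<Prod>j<k. \<Sum>q<k. of_int (b q) * (w ^ j) ^ q)"
    using poly_root_of_unity[OF w_unity assms(2)] by (simp add: b_def wrap_coeffs_def of_int_sum)
  also have "\<dots> = of_int (det (circulant k b))"
    using of_int_det_circulant[OF w w_inj] by simp
  finally have "det (circulant k b) = d"
    by simp
  then show "d \<in> circ_dets k"
    by (auto simp: circ_dets_def)
qed

theorem proposition1p4:
  fixes p t :: nat
  assumes "prime p" and "t \<ge> 2"
  shows "circ_dets (p ^ t) \<subseteq> circ_dets (p ^ (t - 1))"
proof -
  have "p ^ t = p * p ^ (t - 1)"
    using assms(2) by (simp flip: power_Suc)
  then show ?thesis
    using circ_dets_mult_subset[of p "p ^ (t - 1)"] prime_gt_0_nat[OF assms(1)] by simp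
qed

end
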